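(* Let $A_1A_2A_3A_4$ be a (non-degenerate) tetrahedron in $\mathbb{R}^3$ with $A_1A_4+A_2A_3>A_1A_2+A_3A_4$, and let $B_1,B_2,B_3,B_4,B_{12},B_{34}$ be positive real numbers. Put $B_{ST}=\frac{B_{12}+B_{34}}{2}$ and $$f(O_{12},O_{34})=B_1|A_1O_{12}|+B_2|A_2O_{12}|+B_3|A_3O_{34}|+B_4|A_4O_{34}|+B_{ST}\,|O_{12}O_{34}|,\qquad O_{12},O_{34}\in\mathbb{R}^3 .$$ Suppose $(O_{12},O_{34})$ is a minimizer of $f$ such that $O_{12}$ and $O_{34}$ are interior points of the tetrahedron with $O_{12}\neq O_{34}$. Let $\alpha_{12}=\angle A_1O_{12}A_2$, $\alpha_1=\angle A_2O_{12}O_{34}$, $\alpha_{34}=\angle A_3O_{34}A_4$, $\alpha_4=\angle A_3O_{34}O_{12}$. Then $$\cos\alpha_{12}=\frac{B_{ST}^2-B_1^2-B_2^2}{2B_1B_2},\quad \cos\alpha_1=\frac{B_1^2-B_2^2-B_{ST}^2}{2B_2B_{ST}},$$ $$\cos\alpha_{34}=\frac{B_{ST}^2-B_3^2-B_4^2}{2B_3B_4},\quad \cos\alpha_4=\frac{B_4^2-B_3^2-B_{ST}^2}{2B_3B_{ST}}.$$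
   Context: $|XY|$ denotes Euclidean distance and $\angle XYZ\in[0,\pi]$ the angle at $Y$. The problem of minimizing $f$ is the weighted Steiner problem for the four points (with weights $B_i$ at $A_i$ and weights $B_{12},B_{34}$ at the two interior nodes $O_{12},O_{34}$, the nodes being the weighted Fermat–Torricelli points). *)

theory Defs
  imports "HOL-Analysis.Analysis"
begin

definition angle_at :: "real^3 \<Rightarrow> real^3 \<Rightarrow> real^3 \<Rightarrow> real" where
  "angle_at X Y Z = arccos (((X - Y) \<bullet> (Z - Y)) / (norm (X - Y) * norm (Z - Y)))"

definition steiner_f :: "real^3 \<Rightarrow> real^3 \<Rightarrow> real^3 \<Rightarrow> real^3 \<Rightarrow>
    real \<Rightarrow> real \<Rightarrow> real \<Rightarrow> real \<Rightarrow> real \<Rightarrow> real \<Rightarrow> real^3 \<Rightarrow> real^3 \<Rightarrow> real" where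
  "steiner_f A1 A2 A3 A4 B1 B2 B3 B4 B12 B34 O12 O34 =
     B1 * dist A1 O12 + B2 * dist A2 O12 + B3 * dist A3 O34 + B4 * dist A4 O34
     + ((B12 + B34) / 2) * dist O12 O34"

end

theory Submission imports Defs begin

text \<open>
  Freezing one interior node turns \<open>f\<close> into a weighted Fermat--Torricelli function of the
  other node with three anchors. Since the nodes are interior, they are not vertices of the
  tetrahedron, and \<open>O\<^sub>1\<^sub>2 \<noteq> O\<^sub>3\<^sub>4\<close>; so each node lies away from its three anchors,
  where the function is differentiable and its gradient, the weighted sum of the unit vectors
  pointing from the anchors to the node, must vanish. Three unit vectors \<open>u, v, w\<close> with
  \<open>p u + q v + r w = 0\<close> form a triangle with sides \<open>p, q, r\<close>, and the law of cosines
  gives \<open>u \<bullet> v = (r\<^sup>2 - p\<^sup>2 - q\<^sup>2) / (2 p q)\<close>.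
\<close>

lemma has_derivative_norm_diff:
  fixes a x :: "'a::real_inner"
  assumes "x \<noteq> a"
  shows "((\<lambda>y. norm (y - a)) has_derivative (\<lambda>h. sgn (x - a) \<bullet> h)) (at x)"
proof -
  have "((\<lambda>y. y - a) has_derivative (\<lambda>h. h)) (at x)"
    by (auto intro!: derivative_eq_intros)
  from has_derivative_compose[OF this has_derivative_norm[of "x - a"]] assms
  show ?thesis by (simp add: o_def inner_commute)
qed

lemma weighted_fermat_point_balance:
  fixes a b c x :: "'a::real_inner"
  assumes "x \<noteq> a" "x \<noteq> b" "x \<noteq> c"
    and min: "\<And>y. p * norm (x - a) + q * norm (x - b) + r * norm (x - c)
                  \<le> p * norm (y - a) + q * norm (y - b) + r * norm (y - c)"
  shows "p *\<^sub>R sgn (x - a) + q *\<^sub>R sgn (x - b) + r *\<^sub>R sgn (x - c) = 0"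
proof -
  define g where "g = p *\<^sub>R sgn (x - a) + q *\<^sub>R sgn (x - b) + r *\<^sub>R sgn (x - c)"
  have "((\<lambda>y. p * norm (y - a) + q * norm (y - b) + r * norm (y - c))
          has_derivative (\<lambda>h. g \<bullet> h)) (at x)"
    unfolding g_def
    by (rule has_derivative_eq_rhs,
        (rule has_derivative_add has_derivative_mult_right has_derivative_norm_diff assms)+)
       (auto simp: inner_add_left fun_eq_iff)
  then have "(\<lambda>h. g \<bullet> h) = (\<lambda>h. 0)"
    by (rule has_derivative_local_min) (auto intro: always_eventually min)
  then have "g \<bullet> g = 0" by metis
  then show ?thesis unfolding g_def by simp
qed

lemma inner_unit_vectors_of_weighted_sum_zero:
  fixes u v w :: "'a::real_inner"
  assumes "norm u = 1" "norm v = 1" "norm w = 1" "p \<noteq> 0" "q \<noteq> 0"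
    and sum: "p *\<^sub>R u + q *\<^sub>R v + r *\<^sub>R w = 0"
  shows "u \<bullet> v = (r\<^sup>2 - p\<^sup>2 - q\<^sup>2) / (2 * p * q)"
proof -
  have unit: "u \<bullet> u = 1" "v \<bullet> v = 1" "w \<bullet> w = 1"
    using assms(1-3) by (simp_all add: dot_square_norm)
  have "r *\<^sub>R w = - (p *\<^sub>R u + q *\<^sub>R v)"
    using sum by (simp add: algebra_simps eq_neg_iff_add_eq_0)
  then have "(r *\<^sub>R w) \<bullet> (r *\<^sub>R w) = (p *\<^sub>R u + q *\<^sub>R v) \<bullet> (p *\<^sub>R u + q *\<^sub>R v)"
    by (simp only: inner_minus_left inner_minus_right minus_minus)
  then have "r\<^sup>2 = p\<^sup>2 + q\<^sup>2 + 2 * p * q * (u \<bullet> v)"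
    by (simp add: inner_add_left inner_add_right unit inner_commute power2_eq_square
        algebra_simps)
  then show ?thesis using assms(4,5) by (simp add: field_simps)
qed

lemma weighted_fermat_point_cosines:
  fixes a b c x :: "'a::real_inner"
  assumes "x \<noteq> a" "x \<noteq> b" "x \<noteq> c" "p > 0" "q > 0" "r > 0"
    and "\<And>y. p * norm (x - a) + q * norm (x - b) + r * norm (x - c)
               \<le> p * norm (y - a) + q * norm (y - b) + r * norm (y - c)"
  shows "sgn (x - a) \<bullet> sgn (x - b) = (r\<^sup>2 - p\<^sup>2 - q\<^sup>2) / (2 * p * q)"
    and "sgn (x - b) \<bullet> sgn (x - c) = (p\<^sup>2 - q\<^sup>2 - r\<^sup>2) / (2 * q * r)"
    and "sgn (x - a) \<bullet> sgn (x - c) = (q\<^sup>2 - p\<^sup>2 - r\<^sup>2) / (2 * p * r)"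
proof -
  have unit: "norm (sgn (x - a)) = 1" "norm (sgn (x - b)) = 1" "norm (sgn (x - c)) = 1"
    using assms(1-3) by (simp_all add: norm_sgn)
  have balance: "p *\<^sub>R sgn (x - a) + q *\<^sub>R sgn (x - b) + r *\<^sub>R sgn (x - c) = 0"
    using weighted_fermat_point_balance assms by blast
  note cosine_law = inner_unit_vectors_of_weighted_sum_zero
  show "sgn (x - a) \<bullet> sgn (x - b) = (r\<^sup>2 - p\<^sup>2 - q\<^sup>2) / (2 * p * q)"
    using cosine_law[OF unit(1,2,3), of p q r] balance assms(4,5) by simp
  show "sgn (x - b) \<bullet> sgn (x - c) = (p\<^sup>2 - q\<^sup>2 - r\<^sup>2) / (2 * q * r)"
    using cosine_law[OF unit(2,3,1), of q r p] balance assms(5,6) by (simp add: algebra_simps)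
  show "sgn (x - a) \<bullet> sgn (x - c) = (q\<^sup>2 - p\<^sup>2 - r\<^sup>2) / (2 * p * r)"
    using cosine_law[OF unit(1,3,2), of p r q] balance assms(4,6) by (simp add: algebra_simps)
qed

text \<open>No side condition is needed: for \<open>X = Y\<close> both sides are \<open>0\<close>, since the quotient
  in \<^const>\<open>angle_at\<close> is then \<open>0\<close> and \<open>sgn 0 = 0\<close>.\<close>

lemma cos_angle_at:
  "cos (angle_at X Y Z) = sgn (Y - X) \<bullet> sgn (Y - Z)"
proof -
  have "((X - Y) \<bullet> (Z - Y)) / (norm (X - Y) * norm (Z - Y)) = sgn (Y - X) \<bullet> sgn (Y - Z)"
    by (simp add: sgn_div_norm norm_minus_commute[of X] norm_minus_commute[of Z]
        inner_diff_left inner_diff_right divide_inverse algebra_simps)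
  moreover have "\<bar>sgn (Y - X) \<bullet> sgn (Y - Z)\<bar> \<le> 1"
    using Cauchy_Schwarz_ineq2[of "sgn (Y - X)" "sgn (Y - Z)"]
    by (smt (verit) mult_le_one norm_ge_zero norm_sgn)
  ultimately show ?thesis unfolding angle_at_def by (simp add: cos_arccos_abs)
qed

lemma vertex_notin_interior_tetrahedron:
  fixes a b c d :: "real^3"
  assumes "\<not> coplanar {a, b, c, d}"
  shows "a \<notin> interior (convex hull {a, b, c, d})"
proof -
  have "a \<notin> convex hull {b, c, d}"
  proof
    assume "a \<in> convex hull {b, c, d}"
    then have "{a, b, c, d} \<subseteq> affine hull {b, c, d}"
      using convex_hull_subset_affine_hull by (auto intro: hull_inc)
    then show False using assms unfolding coplanar_def by blast
  qed
  then show ?thesis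
    by (simp add: extreme_point_of_convex_hull_insert extreme_point_not_in_interior)
qed

theorem theorem3:
  fixes A1 A2 A3 A4 O12 O34 :: "real^3"
    and B1 B2 B3 B4 B12 B34 :: real
  assumes nondeg: "\<not> coplanar {A1, A2, A3, A4}"
    and ineq: "dist A1 A4 + dist A2 A3 > dist A1 A2 + dist A3 A4"
    and pos: "B1 > 0" "B2 > 0" "B3 > 0" "B4 > 0" "B12 > 0" "B34 > 0"
    and minim: "\<forall>P Q. steiner_f A1 A2 A3 A4 B1 B2 B3 B4 B12 B34 O12 O34
                       \<le> steiner_f A1 A2 A3 A4 B1 B2 B3 B4 B12 B34 P Q"
    and int12: "O12 \<in> interior (convex hull {A1, A2, A3, A4})"
    and int34: "O34 \<in> interior (convex hull {A1, A2, A3, A4})"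
    and neq: "O12 \<noteq> O34"
  shows "(cos (angle_at A1 O12 A2) = (((B12 + B34) / 2)\<^sup>2 - B1\<^sup>2 - B2\<^sup>2) / (2 * B1 * B2)) \<and>
     (cos (angle_at A2 O12 O34) = (B1\<^sup>2 - B2\<^sup>2 - ((B12 + B34) / 2)\<^sup>2) / (2 * B2 * ((B12 + B34) / 2))) \<and>
     (cos (angle_at A3 O34 A4) = (((B12 + B34) / 2)\<^sup>2 - B3\<^sup>2 - B4\<^sup>2) / (2 * B3 * B4)) \<and>
     (cos (angle_at A3 O34 O12) = (B4\<^sup>2 - B3\<^sup>2 - ((B12 + B34) / 2)\<^sup>2) / (2 * B3 * ((B12 + B34) / 2)))"
proof -
  define BS where "BS = (B12 + B34) / 2"
  have vertex: "O12 \<noteq> A1" "O12 \<noteq> A2" "O34 \<noteq> A3" "O34 \<noteq> A4"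
    using int12 int34 nondeg vertex_notin_interior_tetrahedron[of A1 A2 A3 A4]
      vertex_notin_interior_tetrahedron[of A2 A1 A3 A4]
      vertex_notin_interior_tetrahedron[of A3 A1 A2 A4]
      vertex_notin_interior_tetrahedron[of A4 A1 A2 A3]
    by (auto simp: insert_commute)
  have "BS > 0" using pos unfolding BS_def by simp
  have min12: "B1 * norm (O12 - A1) + B2 * norm (O12 - A2) + BS * norm (O12 - O34)
      \<le> B1 * norm (y - A1) + B2 * norm (y - A2) + BS * norm (y - O34)" for y
    using minim[rule_format, of y O34] unfolding steiner_f_def BS_def[symmetric]
    by (simp add: dist_norm norm_minus_commute)
  have min34: "B3 * norm (O34 - A3) + B4 * norm (O34 - A4) + BS * norm (O34 - O12)
      \<le> B3 * norm (y - A3) + B4 * norm (y - A4) + BS * norm (y - O12)" for y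
    using minim[rule_format, of O12 y] unfolding steiner_f_def BS_def[symmetric]
    by (simp add: dist_norm norm_minus_commute)
  note node12 = weighted_fermat_point_cosines[OF vertex(1,2) neq pos(1,2) \<open>BS > 0\<close> min12]
  note node34 =
    weighted_fermat_point_cosines[OF vertex(3,4) neq[symmetric] pos(3,4) \<open>BS > 0\<close> min34]
  show ?thesis
    unfolding BS_def[symmetric] cos_angle_at using node12(1,2) node34(1,3) by simp
qed

end
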